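(* Let $\varepsilon_+(C,C_D)$ and $\lambda_+(C_D)$ be as defined in the context. Then: (i) If $B>1+\beta+\delta$: $\lambda_+(C_D)>0$ for every $C_D>0$, and $\varepsilon_+(C,C_D)>0$ for every $(C,C_D)\in[0,\infty)^2\setminus\{(0,0)\}$; thus every equilibrium $(0,0,C_D,0,0,D)$ with $C_D>0$ and every equilibrium $(C,0,C_D,0,0,0)$ with $(C,C_D)\ne(0,0)$ has a positive real Jacobian eigenvalue (is unstable). (ii) If $1+\beta<B<1+\beta+\delta$: $\lambda_+(C_D)<0$ for every $C_D>0$; and for $C,C_D\ge0$ with $C_D>0$, $\varepsilon_+(C,C_D)<0$ if $$\frac{C}{C_D}<\frac{1-\frac{B}{1+\beta+\delta}}{\frac{B}{1+\beta}-1},$$ while $\varepsilon_+(C,C_D)>0$ if the reverse strict inequality holds (and $\varepsilon_+(C,0)>0$ for $C>0$). (iii) If $0<B<1+\beta$: $\lambda_+(C_D)<0$ for every $C_D>0$ and $\varepsilon_+(C,C_D)<0$ for every $(C,C_D)\in[0,\infty)^2\setminus\{(0,0)\}$. In all cases, at every point of $\{(0,0,0,0,V,D):V,D\ge0,(V,D)\ne(0,0)\}$ all Jacobian eigenvalues are non-positive.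
   Context: Consider the autonomous system of ODEs in the state variables $(C,C_V,C_D,C_{DV},V,D)\in\mathbb{R}^6$: $\dot C=-\iota C(V+D)$, $\dot C_V=\iota CV-C_V(\iota D+\alpha)$, $\dot C_D=\iota(CD-C_DV)$, $\dot C_{DV}=\iota(C_DV+C_VD)-\alpha C_{DV}$, $\dot V=\alpha\eta\left(C_V+\frac{C_{DV}}{\kappa}\right)-\iota V(C+C_D)$, $\dot D=\alpha\beta\eta\left(C_V+\frac{C_{DV}}{\kappa}\right)+\alpha\delta\eta\frac{C_{DV}}{\kappa}-\iota D(C+C_V)$, where $B>0$, $\beta\in[0,1]$, $\delta>1$, $\iota>0$, $\alpha>0$, $\eta=\frac{B}{1+\beta}$, $\kappa=1+\frac{\delta}{1+\beta}$. Define $\varepsilon_+(C,C_D)=-\frac{\iota(C+C_D)+\alpha}{2}+\frac12\sqrt{4\alpha C\eta\iota+(\iota(C+C_D)-\alpha)^2+\frac{4\alpha C_D\eta\iota}{\kappa}}$ (the largest non-trivial Jacobian eigenvalue at the equilibrium $(C,0,C_D,0,0,0)$) and $\lambda_+(C_D)=-\frac{\iota C_D+\alpha}{2}+\frac12\sqrt{(\iota C_D-\alpha)^2+\frac{4\alpha C_D\eta\iota}{\kappa}}$ (the largest non-trivial Jacobian eigenvalue at the equilibrium $(0,0,C_D,0,0,D)$). *)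

theory Defs
  imports "HOL-Analysis.Analysis"
begin

definition eta :: "real \<Rightarrow> real \<Rightarrow> real" where
  "eta B \<beta> = B / (1 + \<beta>)"

definition kappa :: "real \<Rightarrow> real \<Rightarrow> real" where
  "kappa \<beta> \<delta> = 1 + \<delta> / (1 + \<beta>)"

definition st :: "real \<Rightarrow> real \<Rightarrow> real \<Rightarrow> real \<Rightarrow> real \<Rightarrow> real \<Rightarrow> real^6" where
  "st C CV CD CDV V D = vector [C, CV, CD, CDV, V, D]"

definition field :: "real \<Rightarrow> real \<Rightarrow> real \<Rightarrow> real \<Rightarrow> real \<Rightarrow> real^6 \<Rightarrow> real^6" where
  "field B \<beta> \<delta> \<iota> \<alpha> x =
     (let C = x$1; CV = x$2; CD = x$3; CDV = x$4; V = x$5; D = x$6;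
          \<eta> = eta B \<beta>; \<kappa> = kappa \<beta> \<delta> in
      st (- \<iota> * C * (V + D))
         (\<iota> * C * V - CV * (\<iota> * D + \<alpha>))
         (\<iota> * (C * D - CD * V))
         (\<iota> * (CD * V + CV * D) - \<alpha> * CDV)
         (\<alpha> * \<eta> * (CV + CDV / \<kappa>) - \<iota> * V * (C + CD))
         (\<alpha> * \<beta> * \<eta> * (CV + CDV / \<kappa>) + \<alpha> * \<delta> * \<eta> * (CDV / \<kappa>) - \<iota> * D * (C + CV)))"

definition jacobian :: "real \<Rightarrow> real \<Rightarrow> real \<Rightarrow> real \<Rightarrow> real \<Rightarrow> real^6 \<Rightarrow> real^6^6" where
  "jacobian B \<beta> \<delta> \<iota> \<alpha> x = matrix (frechet_derivative (field B \<beta> \<delta> \<iota> \<alpha>) (at x))"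

definition is_eigenvalue :: "real^'n^'n \<Rightarrow> complex \<Rightarrow> bool" where
  "is_eigenvalue A z \<longleftrightarrow> det ((\<chi> i j. (if i = j then z else 0) - complex_of_real (A$i$j)) :: complex^'n^'n) = 0"

definition eps_plus :: "real \<Rightarrow> real \<Rightarrow> real \<Rightarrow> real \<Rightarrow> real \<Rightarrow> real \<Rightarrow> real \<Rightarrow> real" where
  "eps_plus B \<beta> \<delta> \<iota> \<alpha> C CD =
     - (\<iota> * (C + CD) + \<alpha>) / 2
     + sqrt (4 * \<alpha> * C * eta B \<beta> * \<iota> + (\<iota> * (C + CD) - \<alpha>)^2
             + 4 * \<alpha> * CD * eta B \<beta> * \<iota> / kappa \<beta> \<delta>) / 2"

definition lam_plus :: "real \<Rightarrow> real \<Rightarrow> real \<Rightarrow> real \<Rightarrow> real \<Rightarrow> real \<Rightarrow> real" where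
  "lam_plus B \<beta> \<delta> \<iota> \<alpha> CD =
     - (\<iota> * CD + \<alpha>) / 2
     + sqrt ((\<iota> * CD - \<alpha>)^2 + 4 * \<alpha> * CD * eta B \<beta> * \<iota> / kappa \<beta> \<delta>) / 2"

end

theory Submission
  imports Defs
begin

text \<open>At an equilibrium \<open>(C, 0, C_D, 0, 0, D)\<close> (so \<open>C D = 0\<close>) the linearisation maps the
  coordinates \<open>(C_V, C_DV, V)\<close> into themselves, with characteristic equation
  \<open>(z + \<alpha>)(z + \<iota>(C + C_D)) = \<alpha>\<eta>\<iota>(C + C_D/\<kappa>)\<close>. Its larger root is \<open>\<epsilon>\<^sub>+\<close> (and \<open>\<lambda>\<^sub>+\<close> for
  \<open>C = 0\<close>), which has the sign of \<open>C(\<eta> - 1) + C_D(\<eta>/\<kappa> - 1)\<close>; here \<open>\<eta> > 1\<close> iff \<open>B > 1 + \<beta>\<close>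
  and \<open>\<eta>/\<kappa> > 1\<close> iff \<open>B > 1 + \<beta> + \<delta>\<close>. When the root is positive, back substitution extends
  the block eigenvector to an eigenvector of the whole Jacobian.\<close>

lemma exhaust_6:
  fixes x :: 6
  shows "x = 1 \<or> x = 2 \<or> x = 3 \<or> x = 4 \<or> x = 5 \<or> x = 6"
proof (induct x)
  case (of_int z)
  then have "z = 0 \<or> z = 1 \<or> z = 2 \<or> z = 3 \<or> z = 4 \<or> z = 5" by fastforce
  then show ?case by auto
qed

lemma UNIV_6: "(UNIV :: 6 set) = {1, 2, 3, 4, 5, 6}"
  using exhaust_6 by auto

lemma sum_UNIV_6: "sum f (UNIV :: 6 set) = f 1 + f 2 + f 3 + f 4 + f 5 + f 6"
  unfolding UNIV_6 by (simp add: ac_simps)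

lemma vec_eq_iff_6:
  "(x :: 'a^6) = y \<longleftrightarrow>
     x$1 = y$1 \<and> x$2 = y$2 \<and> x$3 = y$3 \<and> x$4 = y$4 \<and> x$5 = y$5 \<and> x$6 = y$6"
proof -
  have "(\<forall>i. x$i = y$i) \<longleftrightarrow> (\<forall>i\<in>{1, 2, 3, 4, 5, 6::6}. x$i = y$i)"
    by (metis UNIV_6 UNIV_I)
  then show ?thesis by (simp add: vec_eq_iff)
qed

lemma st_nth [simp]:
  "st a b c d e f $ 1 = a" "st a b c d e f $ 2 = b" "st a b c d e f $ 3 = c"
  "st a b c d e f $ 4 = d" "st a b c d e f $ 5 = e" "st a b c d e f $ 6 = f"
  unfolding st_def vector_def by simp_all

lemma st_eq_zero_iff: "st a b c d e f = 0 \<longleftrightarrow> a = 0 \<and> b = 0 \<and> c = 0 \<and> d = 0 \<and> e = 0 \<and> f = 0"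
  by (simp add: vec_eq_iff_6)

lemma has_derivative_vec_nth: "((\<lambda>x. x $ i) has_derivative (\<lambda>h. h $ i)) F"
  by (rule bounded_linear_imp_has_derivative[OF bounded_linear_vec_nth])

lemma has_derivative_st [derivative_intros]:
  assumes "(f1 has_derivative f1') F" "(f2 has_derivative f2') F" "(f3 has_derivative f3') F"
    "(f4 has_derivative f4') F" "(f5 has_derivative f5') F" "(f6 has_derivative f6') F"
  shows "((\<lambda>x. st (f1 x) (f2 x) (f3 x) (f4 x) (f5 x) (f6 x)) has_derivative
          (\<lambda>h. st (f1' h) (f2' h) (f3' h) (f4' h) (f5' h) (f6' h))) F"
proof -
  have st_comb: "st a b c d e f = a *\<^sub>R axis 1 1 + b *\<^sub>R axis 2 1 + c *\<^sub>R axis 3 1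
      + d *\<^sub>R axis 4 1 + e *\<^sub>R axis 5 1 + f *\<^sub>R axis 6 1"
    for a b c d e f :: real
    by (simp add: vec_eq_iff_6 axis_def)
  show ?thesis
    unfolding st_comb by (intro derivative_intros assms)
qed

definition field_deriv :: "real \<Rightarrow> real \<Rightarrow> real \<Rightarrow> real \<Rightarrow> real \<Rightarrow> real^6 \<Rightarrow> real^6 \<Rightarrow> real^6" where
 "field_deriv B \<beta> \<delta> \<iota> \<alpha> x h =
     (let C = x$1; CV = x$2; CD = x$3; CDV = x$4; V = x$5; D = x$6;
          h1 = h$1; h2 = h$2; h3 = h$3; h4 = h$4; h5 = h$5; h6 = h$6;
          \<eta> = eta B \<beta>; \<kappa> = kappa \<beta> \<delta> in
      st (- \<iota> * (h1 * (V + D) + C * (h5 + h6)))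
         (\<iota> * (h1 * V + C * h5) - (h2 * (\<iota> * D + \<alpha>) + CV * \<iota> * h6))
         (\<iota> * (h1 * D + C * h6 - h3 * V - CD * h5))
         (\<iota> * (h3 * V + CD * h5 + h2 * D + CV * h6) - \<alpha> * h4)
         (\<alpha> * \<eta> * (h2 + h4 / \<kappa>) - \<iota> * (h5 * (C + CD) + V * (h1 + h3)))
         (\<alpha> * \<beta> * \<eta> * (h2 + h4 / \<kappa>) + \<alpha> * \<delta> * \<eta> * (h4 / \<kappa>)
            - \<iota> * (h6 * (C + CV) + D * (h1 + h2))))"

lemma has_derivative_field: "(field B \<beta> \<delta> \<iota> \<alpha> has_derivative field_deriv B \<beta> \<delta> \<iota> \<alpha> x) (at x)"
  unfolding field_def Let_def divide_inverse
  by (rule has_derivative_eq_rhs, (rule derivative_intros has_derivative_vec_nth)+)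
     (simp only: fun_eq_iff field_deriv_def Let_def vec_eq_iff_6 st_nth,
      intro allI conjI; simp add: divide_inverse algebra_simps)

lemma jacobian_eq_matrix: "jacobian B \<beta> \<delta> \<iota> \<alpha> x = matrix (field_deriv B \<beta> \<delta> \<iota> \<alpha> x)"
  unfolding jacobian_def using frechet_derivative_at[OF has_derivative_field] by metis

lemma jacobian_nth: "jacobian B \<beta> \<delta> \<iota> \<alpha> x $ i $ j = field_deriv B \<beta> \<delta> \<iota> \<alpha> x (axis j 1) $ i"
  by (simp add: jacobian_eq_matrix matrix_def)

lemma jacobian_mult_vector: "jacobian B \<beta> \<delta> \<iota> \<alpha> x *v w = field_deriv B \<beta> \<delta> \<iota> \<alpha> x w"
proof -
  have "linear (field_deriv B \<beta> \<delta> \<iota> \<alpha> x)"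
    using has_derivative_field has_derivative_linear by blast
  then show ?thesis
    unfolding jacobian_eq_matrix by (metis matrix_vector_mul(2))
qed

lemma det_eq_0_iff_kernel:
  fixes M :: "'a::field^'n^'n"
  shows "det M = 0 \<longleftrightarrow> (\<exists>v. v \<noteq> 0 \<and> M *v v = 0)"
  using invertible_det_nz[of M] invertible_left_inverse[of M] matrix_left_invertible_ker[of M]
  by blast

lemma is_eigenvalue_iff_eigenvector:
  fixes A :: "real^'n^'n"
  shows "is_eigenvalue A z \<longleftrightarrow>
    (\<exists>v. v \<noteq> 0 \<and> (\<forall>i. z * v$i = (\<Sum>j\<in>UNIV. complex_of_real (A$i$j) * v$j)))"
proof -
  have "(((\<chi> i j. (if i = j then z else 0) - complex_of_real (A$i$j)) :: complex^'n^'n) *v v) $ i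
        = z * v$i - (\<Sum>j\<in>UNIV. complex_of_real (A$i$j) * v$j)" for v i
    by (simp add: matrix_vector_mult_def left_diff_distrib sum_subtractf
        if_distrib[of "\<lambda>a. a * _"] cong: if_cong)
  then have "(((\<chi> i j. (if i = j then z else 0) - complex_of_real (A$i$j)) :: complex^'n^'n) *v v) = 0
      \<longleftrightarrow> (\<forall>i. z * v$i = (\<Sum>j\<in>UNIV. complex_of_real (A$i$j) * v$j))" for v
    by (simp add: vec_eq_iff)
  then show ?thesis
    unfolding is_eigenvalue_def det_eq_0_iff_kernel by simp
qed

lemma is_eigenvalue_of_real_eigenvector:
  fixes A :: "real^'n^'n"
  assumes "w \<noteq> 0" "A *v w = \<mu> *\<^sub>R w"
  shows "is_eigenvalue A (complex_of_real \<mu>)"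
  unfolding is_eigenvalue_iff_eigenvector
proof (intro exI conjI allI)
  show "(\<chi> i. complex_of_real (w$i)) \<noteq> 0"
    using assms(1) by (simp add: vec_eq_iff)
  fix i
  have "(\<Sum>j\<in>UNIV. complex_of_real (A$i$j) * complex_of_real (w$j)) = complex_of_real ((A *v w)$i)"
    by (simp add: matrix_vector_mult_def)
  then show "complex_of_real \<mu> * (\<chi> i. complex_of_real (w$i))$i
      = (\<Sum>j\<in>UNIV. complex_of_real (A$i$j) * (\<chi> i. complex_of_real (w$i))$j)"
    using assms(2) by simp
qed

lemma quadratic_sqrt_root:
  fixes p d :: real
  assumes "0 \<le> d"
  shows "(- p / 2 + sqrt d / 2)\<^sup>2 + p * (- p / 2 + sqrt d / 2) = (d - p\<^sup>2) / 4"
  using assms by (simp add: power2_eq_square field_simps)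

lemma sqrt_root_pos:
  fixes p q :: real
  assumes "0 < p" "0 < q"
  shows "0 < - p / 2 + sqrt (p\<^sup>2 + 4 * q) / 2"
proof -
  have "p < sqrt (p\<^sup>2 + 4 * q)" using assms by (intro real_less_rsqrt) simp
  then show ?thesis by simp
qed

lemma sqrt_root_neg:
  fixes p q :: real
  assumes "0 < p" "q < 0"
  shows "- p / 2 + sqrt (p\<^sup>2 + 4 * q) / 2 < 0"
proof -
  have "sqrt (p\<^sup>2 + 4 * q) < sqrt (p\<^sup>2)" using assms by (intro real_sqrt_less_mono) simp
  then show ?thesis using assms by simp
qed

definition net_gain :: "real \<Rightarrow> real \<Rightarrow> real \<Rightarrow> real \<Rightarrow> real \<Rightarrow> real" where
  "net_gain B \<beta> \<delta> C CD = C * (eta B \<beta> - 1) + CD * (eta B \<beta> / kappa \<beta> \<delta> - 1)"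

lemma eps_plus_eq_net_gain:
  "eps_plus B \<beta> \<delta> \<iota> \<alpha> C CD = - (\<iota> * (C + CD) + \<alpha>) / 2
     + sqrt ((\<iota> * (C + CD) + \<alpha>)\<^sup>2 + 4 * (\<alpha> * \<iota> * net_gain B \<beta> \<delta> C CD)) / 2"
proof -
  have "4 * \<alpha> * C * eta B \<beta> * \<iota> + (\<iota> * (C + CD) - \<alpha>)\<^sup>2 + 4 * \<alpha> * CD * eta B \<beta> * \<iota> / kappa \<beta> \<delta>
      = (\<iota> * (C + CD) + \<alpha>)\<^sup>2 + 4 * (\<alpha> * \<iota> * net_gain B \<beta> \<delta> C CD)"
    by (simp add: net_gain_def power2_eq_square algebra_simps)
  then show ?thesis unfolding eps_plus_def by simp
qed

lemma lam_plus_eq_eps_plus: "lam_plus B \<beta> \<delta> \<iota> \<alpha> CD = eps_plus B \<beta> \<delta> \<iota> \<alpha> 0 CD"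
  unfolding lam_plus_def eps_plus_def by simp

lemma eps_plus_pos:
  assumes "0 < \<iota>" "0 < \<alpha>" "0 \<le> C" "0 \<le> CD" "0 < net_gain B \<beta> \<delta> C CD"
  shows "0 < eps_plus B \<beta> \<delta> \<iota> \<alpha> C CD"
  unfolding eps_plus_eq_net_gain using assms
  by (intro sqrt_root_pos) (auto intro!: add_nonneg_pos)

lemma eps_plus_neg:
  assumes "0 < \<iota>" "0 < \<alpha>" "0 \<le> C" "0 \<le> CD" "net_gain B \<beta> \<delta> C CD < 0"
  shows "eps_plus B \<beta> \<delta> \<iota> \<alpha> C CD < 0"
  unfolding eps_plus_eq_net_gain using assms
  by (intro sqrt_root_neg) (auto intro!: add_nonneg_pos simp: mult_pos_neg)

lemma eps_plus_characteristic:
  assumes "0 < \<iota>" "0 < \<alpha>" "0 \<le> C" "0 \<le> CD" and pos: "0 < eps_plus B \<beta> \<delta> \<iota> \<alpha> C CD"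
  defines "z \<equiv> eps_plus B \<beta> \<delta> \<iota> \<alpha> C CD"
  shows "(z + \<alpha>) * (z + \<iota> * (C + CD)) = \<alpha> * eta B \<beta> * \<iota> * (C + CD / kappa \<beta> \<delta>)"
proof -
  define p where "p = \<iota> * (C + CD) + \<alpha>"
  define d where "d = p\<^sup>2 + 4 * (\<alpha> * \<iota> * net_gain B \<beta> \<delta> C CD)"
  have z: "z = - p / 2 + sqrt d / 2"
    unfolding z_def p_def d_def by (rule eps_plus_eq_net_gain)
  have "0 < p" using assms by (simp add: p_def add_nonneg_pos)
  moreover have "0 < z" using pos by (simp add: z_def)
  ultimately have "0 < sqrt d" using z by linarith
  then have "z\<^sup>2 + p * z = (d - p\<^sup>2) / 4"
    unfolding z by (intro quadratic_sqrt_root) simp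
  then have "z\<^sup>2 + p * z = \<alpha> * \<iota> * net_gain B \<beta> \<delta> C CD"
    unfolding d_def by simp
  then show ?thesis
    by (simp add: p_def net_gain_def power2_eq_square algebra_simps)
qed

lemma field_deriv_eigenvector:
  assumes "0 < \<iota>" "0 < \<alpha>" "0 < z" "0 \<le> C" "C * D = 0"
    and char: "(z + \<alpha>) * (z + \<iota> * (C + CD)) = \<alpha> * eta B \<beta> * \<iota> * (C + CD / kappa \<beta> \<delta>)"
  obtains w where "w \<noteq> 0" "field_deriv B \<beta> \<delta> \<iota> \<alpha> (st C 0 CD 0 0 D) w = z *\<^sub>R w"
proof -
  let ?e = "eta B \<beta>" and ?k = "kappa \<beta> \<delta>"
  define h2 where "h2 = \<iota> * C / (z + \<alpha>)"
  define h4 where "h4 = \<iota> * CD / (z + \<alpha>)"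
  define h6 where "h6 = (\<alpha> * \<beta> * ?e * (h2 + h4 / ?k) + \<alpha> * \<delta> * ?e * (h4 / ?k)) / (z + \<iota> * C)"
  define h1 where "h1 = - \<iota> * C * (1 + h6) / z"
  define h3 where "h3 = \<iota> * (C * h6 - CD) / z"
  have za: "0 < z + \<alpha>" and zc: "0 < z + \<iota> * C"
    using assms by (simp_all add: add_pos_nonneg)
  have D: "h1 * D = 0" "h2 * D = 0"
    using \<open>C * D = 0\<close> by (auto simp: h1_def h2_def)
  have "\<alpha> * ?e * (h2 + h4 / ?k) = \<alpha> * ?e * \<iota> * (C + CD / ?k) / (z + \<alpha>)"
    by (simp add: h2_def h4_def add_divide_distrib algebra_simps)
  also have "\<dots> = z + \<iota> * (C + CD)"
    using char za by (simp add: divide_eq_eq ac_simps)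
  finally have r5: "\<alpha> * ?e * (h2 + h4 / ?k) - \<iota> * (C + CD) = z" by simp
  have "h6 * (z + \<iota> * C) = \<alpha> * \<beta> * ?e * (h2 + h4 / ?k) + \<alpha> * \<delta> * ?e * (h4 / ?k)"
    using zc by (simp add: h6_def)
  moreover have "D * (h1 + h2) = 0"
    using D by (auto simp: distrib_left)
  ultimately have r6: "\<alpha> * \<beta> * ?e * (h2 + h4 / ?k) + \<alpha> * \<delta> * ?e * (h4 / ?k)
      - \<iota> * (h6 * C + D * (h1 + h2)) = z * h6"
    by (simp add: algebra_simps)
  have r1: "- \<iota> * (h1 * D + C * (1 + h6)) = z * h1"
    using D \<open>0 < z\<close> by (simp add: h1_def)
  have r2: "\<iota> * C - h2 * (\<iota> * D + \<alpha>) = z * h2"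
    using D za by (simp add: h2_def field_simps)
  have r3: "\<iota> * (h1 * D + C * h6 - CD) = z * h3"
    using D \<open>0 < z\<close> by (simp add: h3_def)
  have r4: "\<iota> * (CD + h2 * D) - \<alpha> * h4 = z * h4"
    unfolding D(2) using za by (simp add: h4_def field_simps)
  show thesis
  proof
    show "st h1 h2 h3 h4 1 h6 \<noteq> 0" by (simp add: st_eq_zero_iff)
    show "field_deriv B \<beta> \<delta> \<iota> \<alpha> (st C 0 CD 0 0 D) (st h1 h2 h3 h4 1 h6) = z *\<^sub>R st h1 h2 h3 h4 1 h6"
      unfolding vec_eq_iff_6 using r1 r2 r3 r4 r5 r6
      by (simp add: field_deriv_def Let_def)
  qed
qed

lemma eps_plus_eigenvalue:
  assumes "0 < \<iota>" "0 < \<alpha>" "0 \<le> C" "0 \<le> CD" "C * D = 0" "0 < eps_plus B \<beta> \<delta> \<iota> \<alpha> C CD"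
  shows "is_eigenvalue (jacobian B \<beta> \<delta> \<iota> \<alpha> (st C 0 CD 0 0 D))
           (complex_of_real (eps_plus B \<beta> \<delta> \<iota> \<alpha> C CD))"
proof -
  obtain w where "w \<noteq> 0"
    "field_deriv B \<beta> \<delta> \<iota> \<alpha> (st C 0 CD 0 0 D) w = eps_plus B \<beta> \<delta> \<iota> \<alpha> C CD *\<^sub>R w"
    using field_deriv_eigenvector[OF assms(1,2,6,3,5) eps_plus_characteristic[OF assms(1-4,6)]] .
  then show ?thesis
    by (intro is_eigenvalue_of_real_eigenvector) (simp_all add: jacobian_mult_vector)
qed

text \<open>At a virus-only point the Jacobian is lower triangular in the order (C, C_V, C_D, C_DV, V, D),
  with diagonal \<open>-\<iota>(V + D), -(\<iota>D + \<alpha>), -\<iota>V, -\<alpha>, 0, 0\<close>.\<close>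
lemma virus_equilibrium_eigenvalue_nonpos:
  assumes "0 < \<iota>" "0 < \<alpha>" "0 \<le> V" "0 \<le> D" "(V, D) \<noteq> (0, 0)"
    and "is_eigenvalue (jacobian B \<beta> \<delta> \<iota> \<alpha> (st 0 0 0 0 V D)) z"
  shows "Im z = 0 \<and> Re z \<le> 0"
proof (rule ccontr)
  assume "\<not> (Im z = 0 \<and> Re z \<le> 0)"
  then have shift: "z + complex_of_real c \<noteq> 0" if "0 \<le> c" for c
    using that by (auto simp: complex_eq_iff)
  obtain v where "v \<noteq> 0" and ev:
    "\<And>i. z * v$i = (\<Sum>j\<in>UNIV. complex_of_real (jacobian B \<beta> \<delta> \<iota> \<alpha> (st 0 0 0 0 V D) $ i $ j) * v$j)"
    using assms(6) unfolding is_eigenvalue_iff_eigenvector by blast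
  note row = ev[unfolded jacobian_nth sum_UNIV_6, simplified field_deriv_def Let_def axis_def, simplified]
  have "0 < V + D" using assms(3-5) by auto
  from row[of 1] have "(z + complex_of_real (\<iota> * (V + D))) * v$1 = 0"
    by (auto simp: algebra_simps eq_neg_iff_add_eq_0)
  then have v1: "v$1 = 0" using shift[of "\<iota> * (V + D)"] \<open>0 < V + D\<close> assms(1) by simp
  from row[of 2] v1 have "(z + complex_of_real (\<iota> * D + \<alpha>)) * v$2 = 0"
    by (auto simp: algebra_simps eq_neg_iff_add_eq_0)
  then have v2: "v$2 = 0" using shift[of "\<iota> * D + \<alpha>"] assms by simp
  from row[of 3] v1 have "(z + complex_of_real (\<iota> * V)) * v$3 = 0"
    by (auto simp: algebra_simps eq_neg_iff_add_eq_0)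
  then have v3: "v$3 = 0" using shift[of "\<iota> * V"] assms by simp
  from row[of 4] v2 v3 have "(z + complex_of_real \<alpha>) * v$4 = 0"
    by (auto simp: algebra_simps eq_neg_iff_add_eq_0)
  then have v4: "v$4 = 0" using shift[of \<alpha>] assms by simp
  have "z \<noteq> 0" using shift[of 0] by simp
  with row[of 5] row[of 6] v1 v2 v3 v4 have "v$5 = 0" "v$6 = 0" by simp_all
  with v1 v2 v3 v4 have "v = 0" by (simp add: vec_eq_iff_6)
  with \<open>v \<noteq> 0\<close> show False ..
qed

lemma net_gain_eq:
  assumes "0 < 1 + \<beta>"
  shows "net_gain B \<beta> \<delta> C CD = C * (B / (1 + \<beta>) - 1) + CD * (B / (1 + \<beta> + \<delta>) - 1)"
proof -
  have "kappa \<beta> \<delta> = (1 + \<beta> + \<delta>) / (1 + \<beta>)"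
    using assms by (simp add: kappa_def field_simps)
  then show ?thesis using assms by (simp add: net_gain_def eta_def)
qed

lemma net_gain_pos_above:
  assumes "0 < 1 + \<beta>" "0 < \<delta>" "1 + \<beta> + \<delta> < B" "0 \<le> C" "0 \<le> CD" "(C, CD) \<noteq> (0, 0)"
  shows "0 < net_gain B \<beta> \<delta> C CD"
proof -
  have "0 < B / (1 + \<beta>) - 1" "0 < B / (1 + \<beta> + \<delta>) - 1"
    using assms(1-3) by (simp_all add: less_divide_eq)
  then show ?thesis
    using assms(4-6) unfolding net_gain_eq[OF assms(1)]
    by (smt (verit) mult_nonneg_nonneg mult_pos_pos prod.inject)
qed

lemma net_gain_neg_below:
  assumes "0 < 1 + \<beta>" "0 < \<delta>" "B < 1 + \<beta>" "0 \<le> C" "0 \<le> CD" "(C, CD) \<noteq> (0, 0)"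
  shows "net_gain B \<beta> \<delta> C CD < 0"
proof -
  have "B / (1 + \<beta>) - 1 < 0" "B / (1 + \<beta> + \<delta>) - 1 < 0"
    using assms(1-3) by (simp_all add: divide_less_eq)
  then show ?thesis
    using assms(4-6) unfolding net_gain_eq[OF assms(1)]
    by (smt (verit) mult_nonneg_nonpos mult_pos_neg prod.inject)
qed

lemma net_gain_sign_between:
  fixes B \<beta> \<delta> C CD :: real
  assumes "0 < 1 + \<beta>" "1 + \<beta> < B" "0 < CD"
  defines "r \<equiv> (1 - B / (1 + \<beta> + \<delta>)) / (B / (1 + \<beta>) - 1)"
  shows "net_gain B \<beta> \<delta> C CD < 0 \<longleftrightarrow> C / CD < r"
    and "0 < net_gain B \<beta> \<delta> C CD \<longleftrightarrow> r < C / CD"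
proof -
  define a where "a = B / (1 + \<beta>) - 1"
  define b where "b = 1 - B / (1 + \<beta> + \<delta>)"
  have "0 < a" using assms(1,2) by (simp add: a_def less_divide_eq)
  have gain: "net_gain B \<beta> \<delta> C CD = C * a - CD * b"
    unfolding net_gain_eq[OF assms(1)] a_def b_def by (simp add: algebra_simps)
  have "C / CD < b / a \<longleftrightarrow> C * a < CD * b" "b / a < C / CD \<longleftrightarrow> CD * b < C * a"
    using \<open>0 < a\<close> assms(3) by (simp_all add: field_simps)
  then show "net_gain B \<beta> \<delta> C CD < 0 \<longleftrightarrow> C / CD < r" "0 < net_gain B \<beta> \<delta> C CD \<longleftrightarrow> r < C / CD"
    unfolding gain r_def a_def[symmetric] b_def[symmetric] by linarith+
qed

theorem mainTheorem8:
  fixes B \<beta> \<delta> \<iota> \<alpha> :: real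
  assumes hB: "B > 0" and h\<beta>: "0 \<le> \<beta>" "\<beta> \<le> 1" and h\<delta>: "\<delta> > 1"
    and h\<iota>: "\<iota> > 0" and h\<alpha>: "\<alpha> > 0"
  shows
   "(B > 1 + \<beta> + \<delta> \<longrightarrow>
      (\<forall>CD > 0. lam_plus B \<beta> \<delta> \<iota> \<alpha> CD > 0) \<and>
      (\<forall>C CD. C \<ge> 0 \<and> CD \<ge> 0 \<and> (C, CD) \<noteq> (0, 0) \<longrightarrow> eps_plus B \<beta> \<delta> \<iota> \<alpha> C CD > 0) \<and>
      (\<forall>CD D. CD > 0 \<longrightarrow>
         (\<exists>\<mu>::real. \<mu> > 0 \<and> is_eigenvalue (jacobian B \<beta> \<delta> \<iota> \<alpha> (st 0 0 CD 0 0 D)) (complex_of_real \<mu>))) \<and>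
      (\<forall>C CD. C \<ge> 0 \<and> CD \<ge> 0 \<and> (C, CD) \<noteq> (0, 0) \<longrightarrow>
         (\<exists>\<mu>::real. \<mu> > 0 \<and> is_eigenvalue (jacobian B \<beta> \<delta> \<iota> \<alpha> (st C 0 CD 0 0 0)) (complex_of_real \<mu>)))) \<and>
    (1 + \<beta> < B \<and> B < 1 + \<beta> + \<delta> \<longrightarrow>
      (\<forall>CD > 0. lam_plus B \<beta> \<delta> \<iota> \<alpha> CD < 0) \<and>
      (\<forall>C CD. C \<ge> 0 \<and> CD > 0 \<and>
         C / CD < (1 - B / (1 + \<beta> + \<delta>)) / (B / (1 + \<beta>) - 1) \<longrightarrow> eps_plus B \<beta> \<delta> \<iota> \<alpha> C CD < 0) \<and>
      (\<forall>C CD. C \<ge> 0 \<and> CD > 0 \<and>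
         C / CD > (1 - B / (1 + \<beta> + \<delta>)) / (B / (1 + \<beta>) - 1) \<longrightarrow> eps_plus B \<beta> \<delta> \<iota> \<alpha> C CD > 0) \<and>
      (\<forall>C > 0. eps_plus B \<beta> \<delta> \<iota> \<alpha> C 0 > 0)) \<and>
    (B < 1 + \<beta> \<longrightarrow>
      (\<forall>CD > 0. lam_plus B \<beta> \<delta> \<iota> \<alpha> CD < 0) \<and>
      (\<forall>C CD. C \<ge> 0 \<and> CD \<ge> 0 \<and> (C, CD) \<noteq> (0, 0) \<longrightarrow> eps_plus B \<beta> \<delta> \<iota> \<alpha> C CD < 0)) \<and>
    (\<forall>V D z. V \<ge> 0 \<and> D \<ge> 0 \<and> (V, D) \<noteq> (0, 0) \<and>
       is_eigenvalue (jacobian B \<beta> \<delta> \<iota> \<alpha> (st 0 0 0 0 V D)) z \<longrightarrow>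
       Im z = 0 \<and> Re z \<le> 0)"
proof -
  have "0 < 1 + \<beta>" "0 < \<delta>" using h\<beta> h\<delta> by simp_all
  note gain_pos = net_gain_pos_above[OF this] and gain_neg = net_gain_neg_below[OF this]
    and gain_between = net_gain_sign_between[OF \<open>0 < 1 + \<beta>\<close>]
  note eps_pos = eps_plus_pos[OF h\<iota> h\<alpha>] and eps_neg = eps_plus_neg[OF h\<iota> h\<alpha>]
  have unstable: "\<exists>\<mu>>0. is_eigenvalue (jacobian B \<beta> \<delta> \<iota> \<alpha> (st C 0 CD 0 0 D)) (complex_of_real \<mu>)"
    if "0 \<le> C" "0 \<le> CD" "C * D = 0" "0 < eps_plus B \<beta> \<delta> \<iota> \<alpha> C CD" for C CD D
    using eps_plus_eigenvalue[OF h\<iota> h\<alpha> that] that(4) by blast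
  have gain_axes: "net_gain B \<beta> \<delta> C 0 = C * (B / (1 + \<beta>) - 1)"
    "net_gain B \<beta> \<delta> 0 CD = CD * (B / (1 + \<beta> + \<delta>) - 1)" for C CD
    using net_gain_eq[OF \<open>0 < 1 + \<beta>\<close>] by simp_all
  have "1 + \<beta> < B \<Longrightarrow> 0 < C \<Longrightarrow> 0 < eps_plus B \<beta> \<delta> \<iota> \<alpha> C 0"
    "B < 1 + \<beta> + \<delta> \<Longrightarrow> 0 < CD \<Longrightarrow> eps_plus B \<beta> \<delta> \<iota> \<alpha> 0 CD < 0" for C CD
    using h\<beta> h\<delta> by (simp_all add: eps_pos eps_neg gain_axes less_divide_eq divide_less_eq mult_pos_neg)
  then show ?thesis
    unfolding lam_plus_eq_eps_plus
    using gain_pos gain_neg gain_between eps_pos eps_neg unstable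
      virus_equilibrium_eigenvalue_nonpos[OF h\<iota> h\<alpha>]
    by (auto intro!: eps_pos eps_neg)
qed

end
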